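(* Let $\mathcal{C}$ be an $[n,k,d]$ linear code over $\mathbb{F}_{q^m}$, $\mathcal{B}$ a basis of $\mathbb{F}_{q^m}$ over $\mathbb{F}_q$, and $u=(i_1,\dots,i_n)\in\{1,\dots,m\}^n$. Then $S_u(\mathcal{C})$ is an $[n,k',d']$ linear code over $\mathbb{F}_q$ with $k'\ge n-m(n-k)$ and $d'\ge d$. Moreover, any decoding algorithm for $\mathcal{C}$ correcting up to $t$ errors can be applied to $S_u(\mathcal{C})$ with the same error-correction capability: if $y\in\mathbb{F}_q^n$ differs from $c\in S_u(\mathcal{C})$ in at most $t$ positions, then inserting zeros at the positions $J_u$ of $y$ and of $c$ and applying $\Phi_{\mathcal{B}}^{-1}$ yields a word of $\mathbb{F}_{q^m}^n$ at Hamming distance at most $t$ from the codeword $\Phi_{\mathcal{B}}^{-1}$(c with zeros inserted) $\in\mathcal{C}$, from which $c$ is recovered.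
   Context: $\phi_{\mathcal{B}}(\sum_ix_ib_i)=(x_1,\dots,x_m)$, $\Phi_{\mathcal{B}}(c_1,\dots,c_n)=(\phi_{\mathcal{B}}(c_1),\dots,\phi_{\mathcal{B}}(c_n))\in\mathbb{F}_q^{nm}$, and $Im_q(\mathcal{C})=\Phi_{\mathcal{B}}(\mathcal{C})$, with positions numbered $1,\dots,nm$. Set $I_u=\{i_1,\ i_2+m,\ i_3+2m,\dots,\ i_n+(n-1)m\}$ and $J_u=\{1,\dots,nm\}\setminus I_u$. For $D\subseteq\mathbb{F}_q^{N}$ and $J\subseteq\{1,\dots,N\}$, $Short_J(D)=\{(x_j)_{j\notin J}:x\in D,\ x_j=0\ \forall j\in J\}$. Define $S_u(\mathcal{C})=Short_{J_u}(Im_q(\mathcal{C}))$. *)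

theory Defs
  imports "HOL-Analysis.Analysis"
begin

text \<open>Words of length n over a field F are vectors of type F^'n (n = CARD('n)).
  F_q is the finite field type 'a, F_{q^m} is the finite field type 'b, and
  F_q sits inside F_{q^m} via a field embedding emb :: 'a => 'b.
  A basis of F_{q^m} over F_q is a family b :: 'm => 'b (m = CARD('m)).\<close>

definition hamming :: "'f::zero ^ 'n \<Rightarrow> 'f ^ 'n \<Rightarrow> nat" where
  "hamming x y = card {i. x $ i \<noteq> y $ i}"

definition min_dist :: "('f::zero ^ 'n) set \<Rightarrow> nat" where
  "min_dist C = Min {hamming x y | x y. x \<in> C \<and> y \<in> C \<and> x \<noteq> y}"

definition is_basis :: "('a::field \<Rightarrow> 'b::field) \<Rightarrow> ('m::finite \<Rightarrow> 'b) \<Rightarrow> bool" where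
  "is_basis emb b \<longleftrightarrow> (\<forall>x. \<exists>!c::'a^'m. x = (\<Sum>i\<in>UNIV. emb (c $ i) * b i))"

definition phiB :: "('a::field \<Rightarrow> 'b::field) \<Rightarrow> ('m::finite \<Rightarrow> 'b) \<Rightarrow> 'b \<Rightarrow> 'a^'m" where
  "phiB emb b x = (THE c. x = (\<Sum>i\<in>UNIV. emb (c $ i) * b i))"

text \<open>Phi_B applied coordinatewise; the image in F_q^{nm} is indexed by pairs (j,i),
  pair (j,i) standing for position i + (j-1) m.\<close>
definition PhiB :: "('a::field \<Rightarrow> 'b::field) \<Rightarrow> ('m::finite \<Rightarrow> 'b) \<Rightarrow> 'b^'n \<Rightarrow> ('a^'m)^'n" where
  "PhiB emb b c = (\<chi> j. phiB emb b (c $ j))"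

definition PhiB_inv :: "('a::field \<Rightarrow> 'b::field) \<Rightarrow> ('m::finite \<Rightarrow> 'b) \<Rightarrow> ('a^'m)^'n \<Rightarrow> 'b^'n" where
  "PhiB_inv emb b w = (\<chi> j. (\<Sum>i\<in>UNIV. emb (w $ j $ i) * b i))"

definition Im_q :: "('a::field \<Rightarrow> 'b::field) \<Rightarrow> ('m::finite \<Rightarrow> 'b) \<Rightarrow> ('b^'n) set \<Rightarrow> (('a^'m)^'n) set" where
  "Im_q emb b C = PhiB emb b ` C"

text \<open>Shortening on J_u = all positions (j,i) with i \<noteq> u j: keep the words vanishing
  on J_u and delete the J_u coordinates. The remaining positions I_u, in increasing
  order, are (1,u 1), ..., (n,u n), so the j-th coordinate of the result is x at (j, u j).\<close>
definition Short_u :: "('n \<Rightarrow> 'm) \<Rightarrow> (('a::zero^'m)^'n) set \<Rightarrow> ('a^'n) set" where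
  "Short_u u D = {(\<chi> j. x $ j $ u j) | x. x \<in> D \<and> (\<forall>j i. i \<noteq> u j \<longrightarrow> x $ j $ i = 0)}"

definition S_u :: "('a::field \<Rightarrow> 'b::field) \<Rightarrow> ('m::finite \<Rightarrow> 'b) \<Rightarrow> ('n \<Rightarrow> 'm) \<Rightarrow> ('b^'n) set \<Rightarrow> ('a^'n) set" where
  "S_u emb b u C = Short_u u (Im_q emb b C)"

definition ins_zeros :: "('n \<Rightarrow> 'm) \<Rightarrow> 'a::zero^'n \<Rightarrow> ('a^'m)^'n" where
  "ins_zeros u y = (\<chi> j. \<chi> i. if i = u j then y $ j else 0)"

end

theory Submission
  imports Defs "HOL-Library.FuncSet"
begin

text \<open>Inserting zeros at \<open>J_u\<close> and applying \<open>\<Phi>_B^-1\<close> is an injective \<open>F_q\<close>-linear map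
  \<open>L : F_q^n \<rightarrow> F_(q^m)^n\<close> acting position by position, so it preserves Hamming distance,
  and \<open>S_u(C)\<close> is exactly the preimage of \<open>C\<close> under \<open>L\<close>. For the dimension, the codewords whose
  coordinates on \<open>J_u\<close> vanish form the kernel of the additive map reading off these
  \<open>n(m - 1)\<close> coordinates, and all of them lie in \<open>L(S_u(C))\<close>; hence
  \<open>q^(mk) = |C| \<le> |S_u(C)| * q^(n(m - 1))\<close>.\<close>

lemma hamming_vec_map_inj:
  fixes f :: "'f::zero \<Rightarrow> 'g::zero"
  assumes "inj f"
  shows "hamming (\<chi> j. f (x $ j)) (\<chi> j. f (y $ j)) = hamming x y"
  using assms by (simp add: hamming_def inj_eq)

lemma min_dist_le_hamming:
  fixes C :: "('f::zero^'n) set"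
  assumes "x \<in> C" "y \<in> C" "x \<noteq> y"
  shows "min_dist C \<le> hamming x y"
proof -
  have "{hamming x y | x y. x \<in> C \<and> y \<in> C \<and> x \<noteq> y} \<subseteq> {..CARD('n)}"
    by (auto simp: hamming_def intro!: card_mono)
  then show ?thesis
    unfolding min_dist_def using assms by (blast intro: Min_le finite_subset)
qed

lemma ins_zeros_0: "ins_zeros u 0 = 0"
  by (simp add: vec_eq_iff ins_zeros_def)

lemma ins_zeros_add:
  fixes s :: "'a::monoid_add^'n"
  shows "ins_zeros u (s + s') = ins_zeros u s + ins_zeros u s'"
  by (simp add: vec_eq_iff ins_zeros_def)

lemma ins_zeros_scale:
  fixes a :: "'a::mult_zero"
  shows "ins_zeros u (a *s s) = (\<chi> j. a *s (ins_zeros u s $ j))"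
  by (simp add: vec_eq_iff ins_zeros_def)

lemma ins_zeros_at_section: "(\<chi> j. ins_zeros u s $ j $ u j) = s"
  by (simp add: vec_eq_iff ins_zeros_def)

lemma ins_zeros_of_section:
  assumes "\<And>j i. i \<noteq> u j \<Longrightarrow> x $ j $ i = 0"
  shows "ins_zeros u (\<chi> j. x $ j $ u j) = x"
  using assms by (auto simp: vec_eq_iff ins_zeros_def)

lemma ins_zeros_off_section: "i \<noteq> u j \<Longrightarrow> ins_zeros u s $ j $ i = 0"
  by (simp add: ins_zeros_def)

lemma inj_ins_zeros: "inj (ins_zeros u)"
  by (rule injI) (metis ins_zeros_at_section)

lemma hamming_ins_zeros: "hamming (ins_zeros u x) (ins_zeros u y) = hamming x y"
proof -
  have "{j. ins_zeros u x $ j \<noteq> ins_zeros u y $ j} = {j. x $ j \<noteq> y $ j}"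
    by (auto simp: ins_zeros_def vec_eq_iff)
  then show ?thesis by (simp add: hamming_def)
qed

lemma card_vec_subspace:
  fixes S :: "('f::{field,finite}^'n) set"
  assumes "vec.subspace S"
  shows "card S = CARD('f) ^ vec.dim S"
proof -
  obtain B where B: "B \<subseteq> S" "vec.independent B" "S \<subseteq> vec.span B" "card B = vec.dim S"
    using vec.basis_exists by blast
  have fin: "finite B" by simp
  have span: "vec.span B = S" using vec.span_subspace[OF B(1) B(3) assms] .
  define comb where "comb f = (\<Sum>v\<in>B. f v *s v)" for f :: "'f^'n \<Rightarrow> 'f"
  have indep: "\<forall>v\<in>B. c v = 0" if "(\<Sum>v\<in>B. c v *s v) = 0" for c
    using B(2) that unfolding vec.independent_explicit by blast
  have "inj_on comb (B \<rightarrow>\<^sub>E UNIV)"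
  proof (rule inj_onI)
    fix f g assume f: "f \<in> B \<rightarrow>\<^sub>E UNIV" and g: "g \<in> B \<rightarrow>\<^sub>E UNIV" and "comb f = comb g"
    then have "(\<Sum>v\<in>B. (f v - g v) *s v) = 0"
      by (simp add: comb_def sum_subtractf vec.scale_left_diff_distrib)
    then have "\<forall>v\<in>B. f v - g v = 0"
      by (rule indep)
    then show "f = g" using f g by (intro PiE_ext) auto
  qed
  moreover have "comb ` (B \<rightarrow>\<^sub>E UNIV) = S"
  proof
    show "comb ` (B \<rightarrow>\<^sub>E UNIV) \<subseteq> S"
      unfolding comb_def span[symmetric] by (auto intro: vec.span_sum vec.span_scale vec.span_base)
    show "S \<subseteq> comb ` (B \<rightarrow>\<^sub>E UNIV)"
    proof
      fix x assume "x \<in> S"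
      then obtain f where x: "x = (\<Sum>v\<in>B. f v *s v)"
        using span vec.span_finite[OF fin] by auto
      have "x = comb (restrict f B)" unfolding x comb_def by (rule sum.cong) auto
      then show "x \<in> comb ` (B \<rightarrow>\<^sub>E UNIV)" by auto
    qed
  qed
  ultimately have "card S = card (B \<rightarrow>\<^sub>E (UNIV::'f set))"
    by (metis card_image)
  also have "\<dots> = CARD('f) ^ card B" by (rule card_funcsetE[OF fin])
  finally show ?thesis using B(4) by simp
qed

lemma card_eq_card_kernel_mult_card_image:
  fixes g :: "'a::ab_group_add \<Rightarrow> 'b::ab_group_add"
  assumes fin: "finite C"
    and add: "\<And>x y. x \<in> C \<Longrightarrow> y \<in> C \<Longrightarrow> x + y \<in> C"
    and diff: "\<And>x y. x \<in> C \<Longrightarrow> y \<in> C \<Longrightarrow> x - y \<in> C"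
    and g_add: "\<And>x y. g (x + y) = g x + g y"
  shows "card C = card {c \<in> C. g c = 0} * card (g ` C)"
proof -
  have g_diff: "g (x - y) = g x - g y" for x y
    by (metis g_add eq_diff_eq)
  define lift where "lift z = (SOME c. c \<in> C \<and> g c = z)" for z
  have lift: "lift z \<in> C \<and> g (lift z) = z" if "z \<in> g ` C" for z
    unfolding lift_def by (rule someI_ex) (use that in blast)
  have "bij_betw (\<lambda>c. (c - lift (g c), g c)) C ({c \<in> C. g c = 0} \<times> g ` C)"
  proof (rule bij_betw_byWitness[where f' = "\<lambda>(k, z). k + lift z"])
    show "\<forall>c\<in>C. (\<lambda>(k, z). k + lift z) (c - lift (g c), g c) = c" by simp
    show "\<forall>p\<in>{c \<in> C. g c = 0} \<times> g ` C.
        (\<lambda>c. (c - lift (g c), g c)) ((\<lambda>(k, z). k + lift z) p) = p"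
      using lift by (auto simp: g_add)
    show "(\<lambda>c. (c - lift (g c), g c)) ` C \<subseteq> {c \<in> C. g c = 0} \<times> g ` C"
      using lift by (auto simp: diff g_diff)
    show "(\<lambda>(k, z). k + lift z) ` ({c \<in> C. g c = 0} \<times> g ` C) \<subseteq> C"
      using lift by (auto simp: add)
  qed
  then show ?thesis
    by (simp add: bij_betw_same_card card_cartesian_product)
qed

definition J_part :: "('n \<Rightarrow> 'm) \<Rightarrow> ('a::ab_group_add^'m)^'n \<Rightarrow> ('a^'m)^'n" where
  "J_part u w = w - ins_zeros u (\<chi> j. w $ j $ u j)"

lemma J_part_add: "J_part u (v + w) = J_part u v + J_part u w"
  by (simp add: J_part_def vec_eq_iff ins_zeros_def)

lemma J_part_eq_0_iff: "J_part u w = 0 \<longleftrightarrow> (\<forall>j i. i \<noteq> u j \<longrightarrow> w $ j $ i = 0)"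
  by (auto simp: J_part_def vec_eq_iff ins_zeros_def)

lemma card_range_J_part:
  fixes u :: "'n::finite \<Rightarrow> 'm::finite"
  shows "card (range (J_part u :: ('a::{ab_group_add,finite}^'m)^'n \<Rightarrow> _)) * CARD('a) ^ CARD('n)
    = CARD('a) ^ (CARD('m) * CARD('n))"
proof -
  define ker where "ker = {w \<in> UNIV :: (('a^'m)^'n) set. J_part u w = 0}"
  have "ker = range (ins_zeros u)"
    unfolding ker_def
    by (auto simp: J_part_eq_0_iff ins_zeros_off_section intro: ins_zeros_of_section[symmetric])
  then have "card ker = CARD('a^'n)"
    using card_image[OF inj_ins_zeros[of u]] by simp
  moreover have "CARD(('a^'m)^'n) = card ker * card (range (J_part u :: ('a^'m)^'n \<Rightarrow> _))"
    unfolding ker_def by (rule card_eq_card_kernel_mult_card_image) (simp_all add: J_part_add)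
  ultimately show ?thesis by (simp add: power_mult mult.commute)
qed

definition lift_word :: "('a::field \<Rightarrow> 'b::field) \<Rightarrow> ('m::finite \<Rightarrow> 'b) \<Rightarrow> ('n \<Rightarrow> 'm) \<Rightarrow> 'a^'n \<Rightarrow> 'b^'n"
  where "lift_word emb b u s = PhiB_inv emb b (ins_zeros u s)"

locale field_basis =
  fixes emb :: "'a::{finite,field} \<Rightarrow> 'b::{finite,field}" and b :: "'m::finite \<Rightarrow> 'b"
  assumes emb_add: "emb (x + y) = emb x + emb y"
    and emb_mult: "emb (x * y) = emb x * emb y"
    and basis: "is_basis emb b"
begin

lemma emb_0: "emb 0 = 0"
  using emb_add[of 0 0] by (metis add.right_neutral add_left_cancel)

lemma phiB_sum: "(\<Sum>i\<in>UNIV. emb (phiB emb b x $ i) * b i) = x"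
proof -
  have "\<exists>!c. x = (\<Sum>i\<in>UNIV. emb (c $ i) * b i)"
    using basis by (simp add: is_basis_def)
  from theI'[OF this] show ?thesis
    unfolding phiB_def by (rule sym)
qed

lemma phiB_eqI: "x = (\<Sum>i\<in>UNIV. emb (c $ i) * b i) \<Longrightarrow> phiB emb b x = c"
  using basis unfolding is_basis_def phiB_def by (blast intro: the1_equality)

lemma card_field_ext: "CARD('b) = CARD('a) ^ CARD('m)"
proof -
  have "bij (phiB emb b)"
    by (intro bijI injI surjI[of _ "\<lambda>c. \<Sum>i\<in>UNIV. emb (c $ i) * b i"]) (metis phiB_sum, rule phiB_eqI, rule refl)
  then have "CARD('b) = CARD('a^'m)"
    by (rule bij_betw_same_card)
  then show ?thesis by simp
qed

lemma PhiB_inv_PhiB: "PhiB_inv emb b (PhiB emb b c) = c"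
  by (simp add: vec_eq_iff PhiB_inv_def PhiB_def phiB_sum)

lemma PhiB_PhiB_inv: "PhiB emb b (PhiB_inv emb b w) = w"
  by (simp add: vec_eq_iff PhiB_inv_def PhiB_def phiB_eqI)

lemma PhiB_inv_0: "PhiB_inv emb b 0 = 0"
  by (simp add: vec_eq_iff PhiB_inv_def emb_0)

lemma PhiB_inv_add: "PhiB_inv emb b (w + w') = PhiB_inv emb b w + PhiB_inv emb b w'"
  by (simp add: vec_eq_iff PhiB_inv_def emb_add distrib_right sum.distrib)

lemma PhiB_inv_scale: "PhiB_inv emb b (\<chi> j. a *s (w $ j)) = emb a *s PhiB_inv emb b w"
  by (simp add: vec_eq_iff PhiB_inv_def emb_mult sum_distrib_left mult.assoc)

lemma PhiB_add: "PhiB emb b (c + c') = PhiB emb b c + PhiB emb b c'"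
  by (metis PhiB_PhiB_inv PhiB_inv_PhiB PhiB_inv_add)

lemma hamming_PhiB_inv: "hamming (PhiB_inv emb b w) (PhiB_inv emb b w') = hamming w w'"
proof -
  have "inj (\<lambda>v. \<Sum>i\<in>UNIV. emb (v $ i) * b i)"
    by (rule injI) (metis phiB_eqI)
  then show ?thesis
    unfolding PhiB_inv_def by (rule hamming_vec_map_inj)
qed

lemma S_u_eq_vimage: "S_u emb b u C = lift_word emb b u -` C"
proof
  show "S_u emb b u C \<subseteq> lift_word emb b u -` C"
    by (auto simp: S_u_def Short_u_def Im_q_def lift_word_def ins_zeros_of_section PhiB_inv_PhiB)
  show "lift_word emb b u -` C \<subseteq> S_u emb b u C"
  proof
    fix s assume "s \<in> lift_word emb b u -` C"
    then have "ins_zeros u s \<in> PhiB emb b ` C"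
      unfolding lift_word_def by (metis PhiB_PhiB_inv image_eqI vimageE)
    then show "s \<in> S_u emb b u C"
      unfolding S_u_def Short_u_def Im_q_def
      by (intro CollectI exI[of _ "ins_zeros u s"]) (simp add: ins_zeros_at_section ins_zeros_off_section)
  qed
qed

lemma hamming_lift_word: "hamming (lift_word emb b u x) (lift_word emb b u y) = hamming x y"
  by (simp add: lift_word_def hamming_PhiB_inv hamming_ins_zeros)

lemma PhiB_lift_word_at_section: "(\<chi> j. PhiB emb b (lift_word emb b u s) $ j $ u j) = s"
  by (simp add: lift_word_def PhiB_PhiB_inv ins_zeros_at_section)

lemma inj_lift_word: "inj (lift_word emb b u)"
  by (rule injI) (metis PhiB_lift_word_at_section)

lemma subspace_S_u:
  assumes "vec.subspace C"
  shows "vec.subspace (S_u emb b u C)"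
  unfolding S_u_eq_vimage vec.subspace_def
  by (simp add: lift_word_def ins_zeros_0 ins_zeros_add ins_zeros_scale PhiB_inv_0 PhiB_inv_add PhiB_inv_scale
      vec.subspace_0[OF assms] vec.subspace_add[OF assms] vec.subspace_scale[OF assms])

lemma dim_S_u_ge:
  fixes C :: "('b^'n) set"
  assumes C: "vec.subspace C"
  shows "CARD('m) * vec.dim C + CARD('n) \<le> vec.dim (S_u emb b u C) + CARD('m) * CARD('n)"
proof -
  define g where "g c = J_part u (PhiB emb b c)" for c :: "'b^'n"
  define K where "K = {c \<in> C. g c = 0}"
  have kernel_image: "card C = card K * card (g ` C)"
    unfolding K_def
    by (rule card_eq_card_kernel_mult_card_image)
      (simp_all add: g_def PhiB_add J_part_add vec.subspace_add[OF C] vec.subspace_diff[OF C])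
  have "K \<subseteq> lift_word emb b u ` S_u emb b u C"
  proof
    fix c assume c: "c \<in> K"
    then have lift: "c = lift_word emb b u (\<chi> j. PhiB emb b c $ j $ u j)"
      by (simp add: K_def g_def J_part_eq_0_iff lift_word_def ins_zeros_of_section PhiB_inv_PhiB)
    with c have "(\<chi> j. PhiB emb b c $ j $ u j) \<in> S_u emb b u C"
      by (simp add: S_u_eq_vimage K_def)
    then show "c \<in> lift_word emb b u ` S_u emb b u C"
      by (rule image_eqI[where f = "lift_word emb b u", OF lift])
  qed
  then have kernel_le: "card K \<le> card (S_u emb b u C)"
    by (metis card_image card_mono finite inj_lift_word inj_on_subset subset_UNIV)
  have image_le: "card (g ` C) \<le> card (range (J_part u :: ('a^'m)^'n \<Rightarrow> _))"
    unfolding g_def by (rule card_mono) auto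
  have q: "1 < CARD('a)"
    using card_mono[of UNIV "{0::'a, 1}"] by simp
  have "CARD('a) ^ (CARD('m) * vec.dim C + CARD('n)) = card C * CARD('a) ^ CARD('n)"
    by (simp add: card_vec_subspace[OF C] card_field_ext power_add power_mult)
  also have "\<dots> \<le> card (S_u emb b u C) * card (range (J_part u :: ('a^'m)^'n \<Rightarrow> _)) * CARD('a) ^ CARD('n)"
    using kernel_image kernel_le image_le by (simp add: mult_le_mono)
  also have "\<dots> = CARD('a) ^ (vec.dim (S_u emb b u C) + CARD('m) * CARD('n))"
    by (simp add: card_range_J_part card_vec_subspace[OF subspace_S_u[OF C]] power_add mult.assoc)
  finally show ?thesis
    using q by (rule power_le_imp_le_exp[rotated])
qed

end

theorem proposition4:
  fixes emb :: "'a::{finite,field} \<Rightarrow> 'b::{finite,field}"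
    and b :: "'m::finite \<Rightarrow> 'b"
    and u :: "'n::finite \<Rightarrow> 'm"
    and C :: "('b^'n) set"
    and k d t :: nat
  assumes emb_one: "emb 1 = 1"
    and emb_add: "\<And>x y. emb (x + y) = emb x + emb y"
    and emb_mult: "\<And>x y. emb (x * y) = emb x * emb y"
    and basis: "is_basis emb b"
    and lin: "vec.subspace C"
    and dimC: "vec.dim C = k"
    and distC: "d = min_dist C"
  shows "vec.subspace (S_u emb b u C)
    \<and> int (vec.dim (S_u emb b u C)) \<ge> int CARD('n) - int CARD('m) * (int CARD('n) - int k)
    \<and> (\<forall>x\<in>S_u emb b u C. \<forall>y\<in>S_u emb b u C. x \<noteq> y \<longrightarrow> hamming x y \<ge> d)
    \<and> (\<forall>c\<in>S_u emb b u C. \<forall>y::'a^'n. hamming y c \<le> t \<longrightarrow>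
          PhiB_inv emb b (ins_zeros u c) \<in> C
        \<and> hamming (PhiB_inv emb b (ins_zeros u y)) (PhiB_inv emb b (ins_zeros u c)) \<le> t
        \<and> (\<chi> j. PhiB emb b (PhiB_inv emb b (ins_zeros u c)) $ j $ u j) = c)
    \<and> (\<forall>dec :: 'b^'n \<Rightarrow> 'b^'n.
          (\<forall>c\<in>C. \<forall>w. hamming w c \<le> t \<longrightarrow> dec w = c) \<longrightarrow>
          (\<forall>c\<in>S_u emb b u C. \<forall>y. hamming y c \<le> t \<longrightarrow>
              (\<chi> j. PhiB emb b (dec (PhiB_inv emb b (ins_zeros u y))) $ j $ u j) = c))"
proof -
  \<comment> \<open>\<open>emb_one\<close> is redundant: \<open>emb 1\<close> is idempotent, and \<open>emb 1 = 0\<close> would force \<open>emb = 0\<close>, leaving no basis.\<close>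
  interpret field_basis emb b
    using emb_add emb_mult basis by unfold_locales
  note S_u = S_u_eq_vimage[of u C]
  have "int (CARD('m) * k + CARD('n)) \<le> int (vec.dim (S_u emb b u C) + CARD('m) * CARD('n))"
    using dim_S_u_ge[OF lin, where u = u] unfolding dimC of_nat_le_iff .
  then have dim: "int CARD('n) - int CARD('m) * (int CARD('n) - int k) \<le> int (vec.dim (S_u emb b u C))"
    by (simp add: algebra_simps)
  have distance: "d \<le> hamming x y" if "x \<in> S_u emb b u C" "y \<in> S_u emb b u C" "x \<noteq> y" for x y
    using min_dist_le_hamming[of "lift_word emb b u x" C "lift_word emb b u y"] that
    by (simp add: S_u distC hamming_lift_word inj_eq[OF inj_lift_word])
  have decoder: "(\<chi> j. PhiB emb b (dec (lift_word emb b u y)) $ j $ u j) = c"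
    if "\<forall>c\<in>C. \<forall>w. hamming w c \<le> t \<longrightarrow> dec w = c" "c \<in> S_u emb b u C" "hamming y c \<le> t"
    for dec c y
    using that by (simp add: S_u hamming_lift_word PhiB_lift_word_at_section)
  show ?thesis
    unfolding lift_word_def[symmetric]
    using subspace_S_u[OF lin, of u] dim distance decoder
    by (simp add: S_u hamming_lift_word PhiB_lift_word_at_section)
qed

end
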